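(* Let $\mathbb{Z}$ be a finite-dimensional Euclidean space, $L>0$, $\beta_k\in(0,1)$, $\eta_k=(1-\beta_k)/L$, $z^0,\tilde z^0,\tilde z^1,\dots\in\mathbb{Z}$, and $z^{k+1}=\beta_kz^0+(1-\beta_k)z^k-\eta_k\tilde z^k$ for $k\ge0$. Then for all $k\ge0$: (1) $z^{k+1}-z^k=\beta_k(z^0-z^k)-\frac{1-\beta_k}{L}\tilde z^k$; (2) $z^{k+1}-z^k=\frac{\beta_k}{1-\beta_k}(z^0-z^{k+1})-\frac1L\tilde z^k$; (3) $z^{k+1}-z^k=-\frac{1-\beta_k}{L}\tilde z^k+\sum_{i=0}^{k-1}\frac{\beta_k}{L}\Big(\prod_{j=i}^{k-1}(1-\beta_j)\Big)\tilde z^i$. Moreover, if $\beta_k=1/(k+2)$, then $\|z^1-z^0\|^2\le\frac1{4L^2}\|\tilde z^0\|^2$ and for $k\ge1$, \[\|z^{k+1}-z^k\|^2\le\frac{2(k+1)^2}{L^2(k+2)^2}\|\tilde z^k\|^2+\frac{2k}{L^2(k+1)^2(k+2)^2}\sum_{i=0}^{k-1}(i+1)^2\|\tilde z^i\|^2.\] *)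

theory Defs
  imports "HOL-Analysis.Analysis"
begin

end

theory Submission
  imports Defs
begin

text \<open>Unrolling the recursion writes \<open>z k - z 0\<close> as a combination of the earlier \<open>zt i\<close>
  with weights \<open>(1/L) \<Prod>j\<in>{i..<k}. (1 - beta j)\<close>. For \<open>beta k = 1/(k+2)\<close> these products
  telescope to \<open>(i+1)/(k+1)\<close>, so that
  \<open>z (k+1) - z k = (\<Sum>i<k. (i+1) zt i) / (L (k+1) (k+2)) - (k+1)/(L (k+2)) zt k\<close>;
  the bound then follows from \<open>\<parallel>a - b\<parallel>\<^sup>2 \<le> 2\<parallel>a\<parallel>\<^sup>2 + 2\<parallel>b\<parallel>\<^sup>2\<close> and Cauchy-Schwarz
  on the sum.\<close>

lemma norm_diff_squared_le:
  fixes a b :: "'a::real_normed_vector"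
  shows "(norm (a - b))\<^sup>2 \<le> 2 * (norm a)\<^sup>2 + 2 * (norm b)\<^sup>2"
proof -
  have "(norm (a - b))\<^sup>2 \<le> (norm a + norm b)\<^sup>2"
    by (simp add: norm_triangle_ineq4 power_mono)
  also have "\<dots> \<le> 2 * (norm a)\<^sup>2 + 2 * (norm b)\<^sup>2"
    using zero_le_power2[of "norm a - norm b"] unfolding power2_eq_square
    by (simp add: algebra_simps)
  finally show ?thesis .
qed

lemma norm_sum_squared_le:
  fixes f :: "'i \<Rightarrow> 'a::real_normed_vector"
  shows "(norm (sum f I))\<^sup>2 \<le> card I * (\<Sum>i\<in>I. (norm (f i))\<^sup>2)"
proof -
  have "(norm (sum f I))\<^sup>2 \<le> (\<Sum>i\<in>I. norm (f i))\<^sup>2"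
    by (simp add: norm_sum power_mono)
  also have "\<dots> \<le> card I * (\<Sum>i\<in>I. (norm (f i))\<^sup>2)"
    using sum_squared_le_sum_of_squares[of "\<lambda>i. norm (f i)" I] by (simp add: mult.commute)
  finally show ?thesis .
qed

lemma prod_one_minus_inverse_plus_two:
  assumes "i \<le> k"
  shows "(\<Prod>j\<in>{i..<k}. 1 - 1 / (real j + 2)) = (real i + 1) / (real k + 1)"
  using assms
proof (induction k rule: dec_induct)
  case base
  then show ?case by simp
next
  case (step n)
  have "1 - 1 / (real n + 2) = (real n + 1) / (real n + 2)"
    by (simp add: field_simps)
  with step show ?case
    by (simp add: prod.atLeastLessThan_Suc)
qed

locale halpern_iteration =
  fixes z zt :: "nat \<Rightarrow> 'a::real_normed_vector"
    and beta :: "nat \<Rightarrow> real"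
    and L :: real
  assumes step: "z (Suc k) = beta k *\<^sub>R z 0 + (1 - beta k) *\<^sub>R z k - ((1 - beta k) / L) *\<^sub>R zt k"
begin

lemma step_diff:
  "z (Suc k) - z k = beta k *\<^sub>R (z 0 - z k) - ((1 - beta k) / L) *\<^sub>R zt k"
  using step[of k] by (simp add: algebra_simps)

lemma step_diff_via_next:
  assumes "beta k \<noteq> 1"
  shows "z (Suc k) - z k = (beta k / (1 - beta k)) *\<^sub>R (z 0 - z (Suc k)) - (1 / L) *\<^sub>R zt k"
proof -
  have "z 0 - z (Suc k) = (1 - beta k) *\<^sub>R (z 0 - z k) + ((1 - beta k) / L) *\<^sub>R zt k"
    using step[of k] by (simp add: algebra_simps)
  also have "\<dots> = (1 - beta k) *\<^sub>R (z 0 - z k + (1 / L) *\<^sub>R zt k)"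
    by (simp add: scaleR_add_right)
  finally have "(beta k / (1 - beta k)) *\<^sub>R (z 0 - z (Suc k)) - (1 / L) *\<^sub>R zt k
      = beta k *\<^sub>R (z 0 - z k) + (beta k / L) *\<^sub>R zt k - (1 / L) *\<^sub>R zt k"
    using assms by (simp add: scaleR_add_right)
  also have "\<dots> = beta k *\<^sub>R (z 0 - z k) - ((1 - beta k) / L) *\<^sub>R zt k"
    by (simp add: diff_divide_distrib scaleR_diff_left)
  finally show ?thesis
    by (simp add: step_diff)
qed

lemma diff_anchor_eq_sum:
  "z k - z 0 = - (\<Sum>i<k. ((1 / L) * (\<Prod>j\<in>{i..<k}. 1 - beta j)) *\<^sub>R zt i)"
proof (induction k)
  case 0
  then show ?case by simp
next
  case (Suc k)
  have "z (Suc k) - z 0 = (1 - beta k) *\<^sub>R (z k - z 0) - ((1 - beta k) / L) *\<^sub>R zt k"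
    using step[of k] by (simp add: algebra_simps)
  also have "\<dots> = - (\<Sum>i<Suc k. ((1 / L) * (\<Prod>j\<in>{i..<Suc k}. 1 - beta j)) *\<^sub>R zt i)"
    by (simp add: Suc scaleR_sum_right prod.atLeastLessThan_Suc mult_ac)
  finally show ?case .
qed

lemma step_diff_eq_sum:
  "z (Suc k) - z k = - (((1 - beta k) / L) *\<^sub>R zt k)
     + (\<Sum>i<k. ((beta k / L) * (\<Prod>j\<in>{i..<k}. 1 - beta j)) *\<^sub>R zt i)"
proof -
  have "z (Suc k) - z k = - (beta k *\<^sub>R (z k - z 0)) - ((1 - beta k) / L) *\<^sub>R zt k"
    using step_diff[of k] by (simp add: algebra_simps)
  then show ?thesis
    by (simp add: diff_anchor_eq_sum scaleR_sum_right)
qed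

lemma harmonic_step_diff:
  assumes beta_eq: "\<And>k. beta k = 1 / (real k + 2)"
  shows "z (Suc k) - z k = (1 / (L * (real k + 1) * (real k + 2))) *\<^sub>R (\<Sum>i<k. (real i + 1) *\<^sub>R zt i)
     - ((real k + 1) / (L * (real k + 2))) *\<^sub>R zt k"
proof -
  have weight: "(beta k / L) * (\<Prod>j\<in>{i..<k}. 1 - beta j) = (real i + 1) / (L * (real k + 1) * (real k + 2))"
    if "i < k" for i
  proof -
    have "(\<Prod>j\<in>{i..<k}. 1 - beta j) = (real i + 1) / (real k + 1)"
      using that by (simp add: beta_eq prod_one_minus_inverse_plus_two)
    then show ?thesis
      by (simp add: beta_eq)
  qed
  have lead: "(1 - beta k) / L = (real k + 1) / (L * (real k + 2))"
    by (simp add: beta_eq field_simps)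
  have "(\<Sum>i<k. ((beta k / L) * (\<Prod>j\<in>{i..<k}. 1 - beta j)) *\<^sub>R zt i)
      = (\<Sum>i<k. ((real i + 1) / (L * (real k + 1) * (real k + 2))) *\<^sub>R zt i)"
    by (rule sum.cong) (simp_all only: lessThan_iff weight)
  then show ?thesis
    unfolding step_diff_eq_sum lead by (simp add: scaleR_sum_right)
qed

lemma harmonic_first_step:
  assumes beta_eq: "\<And>k. beta k = 1 / (real k + 2)"
  shows "(norm (z 1 - z 0))\<^sup>2 = (norm (zt 0))\<^sup>2 / (4 * L\<^sup>2)"
  using harmonic_step_diff[OF beta_eq, of 0]
  by (simp add: power_divide power_mult_distrib)

lemma harmonic_step_norm_bound:
  assumes beta_eq: "\<And>k. beta k = 1 / (real k + 2)"
  shows "(norm (z (Suc k) - z k))\<^sup>2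
     \<le> 2 * (real k + 1)\<^sup>2 / (L\<^sup>2 * (real k + 2)\<^sup>2) * (norm (zt k))\<^sup>2
       + 2 * real k / (L\<^sup>2 * (real k + 1)\<^sup>2 * (real k + 2)\<^sup>2)
         * (\<Sum>i<k. (real i + 1)\<^sup>2 * (norm (zt i))\<^sup>2)"
proof -
  define S where "S = (\<Sum>i<k. (real i + 1) *\<^sub>R zt i)"
  have S_bound: "(norm S)\<^sup>2 \<le> real k * (\<Sum>i<k. (real i + 1)\<^sup>2 * (norm (zt i))\<^sup>2)"
    using norm_sum_squared_le[of "\<lambda>i. (real i + 1) *\<^sub>R zt i" "{..<k}"]
    by (simp add: S_def power_mult_distrib)
  have "(norm (z (Suc k) - z k))\<^sup>2
      \<le> 2 * (norm ((1 / (L * (real k + 1) * (real k + 2))) *\<^sub>R S))\<^sup>2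
        + 2 * (norm (((real k + 1) / (L * (real k + 2))) *\<^sub>R zt k))\<^sup>2"
    unfolding harmonic_step_diff[OF beta_eq] S_def by (rule norm_diff_squared_le)
  also have "\<dots> = 2 * (real k + 1)\<^sup>2 / (L\<^sup>2 * (real k + 2)\<^sup>2) * (norm (zt k))\<^sup>2
      + 2 / (L\<^sup>2 * (real k + 1)\<^sup>2 * (real k + 2)\<^sup>2) * (norm S)\<^sup>2"
    by (simp add: power_mult_distrib power_divide)
  also have "\<dots> \<le> 2 * (real k + 1)\<^sup>2 / (L\<^sup>2 * (real k + 2)\<^sup>2) * (norm (zt k))\<^sup>2
      + 2 / (L\<^sup>2 * (real k + 1)\<^sup>2 * (real k + 2)\<^sup>2)
        * (real k * (\<Sum>i<k. (real i + 1)\<^sup>2 * (norm (zt i))\<^sup>2))"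
    using S_bound by (intro add_left_mono mult_left_mono) simp_all
  finally show ?thesis
    by simp
qed

end

theorem lemma14:
  fixes z zt :: "nat \<Rightarrow> 'a::euclidean_space"
    and beta eta :: "nat \<Rightarrow> real"
    and L :: real
  assumes L_pos: "L > 0"
    and beta_range: "\<And>k. 0 < beta k \<and> beta k < 1"
    and eta_def: "\<And>k. eta k = (1 - beta k) / L"
    and rec: "\<And>k. z (Suc k) = beta k *\<^sub>R z 0 + (1 - beta k) *\<^sub>R z k - eta k *\<^sub>R zt k"
  shows "(\<forall>k. z (Suc k) - z k = beta k *\<^sub>R (z 0 - z k) - ((1 - beta k) / L) *\<^sub>R zt k
             \<and> z (Suc k) - z k = (beta k / (1 - beta k)) *\<^sub>R (z 0 - z (Suc k)) - (1 / L) *\<^sub>R zt k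
             \<and> z (Suc k) - z k = - (((1 - beta k) / L) *\<^sub>R zt k)
                 + (\<Sum>i<k. ((beta k / L) * (\<Prod>j=i..k-1. (1 - beta j))) *\<^sub>R zt i))
       \<and> ((\<forall>k. beta k = 1 / (real k + 2)) \<longrightarrow>
            (norm (z 1 - z 0))^2 \<le> 1 / (4 * L^2) * (norm (zt 0))^2
          \<and> (\<forall>k\<ge>1. (norm (z (Suc k) - z k))^2
                \<le> 2 * (real k + 1)^2 / (L^2 * (real k + 2)^2) * (norm (zt k))^2
                  + 2 * real k / (L^2 * (real k + 1)^2 * (real k + 2)^2)
                    * (\<Sum>i<k. (real i + 1)^2 * (norm (zt i))^2)))"
proof -
  interpret halpern_iteration z zt beta L
    by unfold_locales (simp add: rec eta_def)
  have "(\<Prod>j=i..k-1. 1 - beta j) = (\<Prod>j\<in>{i..<k}. 1 - beta j)" if "i < k" for i k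
    using that by (simp add: atLeastLessThanSuc_atLeastAtMost[symmetric])
  then have "(\<Sum>i<k. ((beta k / L) * (\<Prod>j=i..k-1. 1 - beta j)) *\<^sub>R zt i)
      = (\<Sum>i<k. ((beta k / L) * (\<Prod>j\<in>{i..<k}. 1 - beta j)) *\<^sub>R zt i)" for k
    by (intro sum.cong) auto
  moreover have "beta k \<noteq> 1" for k
    using beta_range[of k] by simp
  ultimately show ?thesis
    using step_diff step_diff_via_next step_diff_eq_sum
      harmonic_first_step harmonic_step_norm_bound
    by simp
qed

end
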